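(* There exists a countable collection $\mathcal{L}$ of languages (over $\mathcal{X}=\mathbb{N}^2$) with closure dimension $0$ such that for every $\varepsilon>0$ and every $n\in\mathbb{N}$, there is no $\varepsilon$-DP randomized map $A:\mathcal{X}^n\to\mathcal{X}$ satisfying $\Pr[A(x_1,\dots,x_n)\in K\setminus\{x_1,\dots,x_n\}]\ge 2/3$ for every $K\in\mathcal{L}$ and every $n$ distinct elements $x_1,\dots,x_n\in K$ (equivalently, every length-$n$ prefix of an enumeration of $K$ without repetitions).
   Context: A language is an infinite subset of $\mathcal{X}$. For a collection $\mathcal{L}'$, $\mathrm{Cl}(\mathcal{L}')=\bigcap_{L\in\mathcal{L}'}L$; the closure dimension of $\mathcal{L}$ is the smallest $d\in\{-1\}\cup\mathbb{N}$ such that every subcollection $\mathcal{L}'\subseteq\mathcal{L}$ has $|\mathrm{Cl}(\mathcal{L}')|=\infty$ or $|\mathrm{Cl}(\mathcal{L}')|\le d$. A randomized map $A:\mathcal{X}^n\to\mathcal{X}$ is $\varepsilon$-DP if for all $X,X'\in\mathcal{X}^n$ differing in exactly one coordinate and all events $E$, $\Pr[A(X)\in E]\le e^\varepsilon\Pr[A(X')\in E]$. *)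

theory Defs
  imports "HOL-Probability.Probability"
begin

type_synonym point = "nat \<times> nat"

definition is_language :: "'a set \<Rightarrow> bool" where
  "is_language K \<longleftrightarrow> infinite K"

text \<open>Cl(L') is the intersection of all members of L' (the empty intersection is UNIV).\<close>
definition Cl :: "'a set set \<Rightarrow> 'a set" where
  "Cl L' = \<Inter> L'"

definition closure_bound :: "'a set set \<Rightarrow> int \<Rightarrow> bool" where
  "closure_bound L d \<longleftrightarrow>
     (\<forall>L' \<subseteq> L. infinite (Cl L') \<or> int (card (Cl L')) \<le> d)"

definition closure_dimension :: "'a set set \<Rightarrow> int" where
  "closure_dimension L = (LEAST d. d \<ge> -1 \<and> closure_bound L d)"

definition neighbours :: "nat \<Rightarrow> 'a list \<Rightarrow> 'a list \<Rightarrow> bool" where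
  "neighbours n xs ys \<longleftrightarrow> length xs = n \<and> length ys = n \<and>
     card {i. i < n \<and> xs ! i \<noteq> ys ! i} = 1"

text \<open>A randomized map X^n -> X (X countable, so output distributions are pmfs),
  inputs of length n represented as lists; epsilon-differential privacy.\<close>
definition eps_DP :: "real \<Rightarrow> nat \<Rightarrow> ('a list \<Rightarrow> 'a pmf) \<Rightarrow> bool" where
  "eps_DP \<epsilon> n A \<longleftrightarrow>
     (\<forall>xs ys E. neighbours n xs ys \<longrightarrow>
        measure_pmf.prob (A xs) E \<le> exp \<epsilon> * measure_pmf.prob (A ys) E)"

end

theory Submission
  imports Defs
begin

text \<open>The rows \<open>{j} \<times> \<nat>\<close> of \<open>\<nat>\<^sup>2\<close> are pairwise disjoint infinite languages, so a subfamily
  with two or more members has empty closure while every other subfamily has infinite closure: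
  the closure dimension is \<open>0\<close>. Suppose an \<open>\<epsilon>\<close>-DP map succeeds with probability \<open>2/3\<close> on every row,
  and feed it the first \<open>n\<close> points \<open>D\<^sub>j\<close> of row \<open>j\<close>. Any two inputs of length \<open>n\<close> are joined by
  \<open>n\<close> neighbouring steps, so on the fixed input \<open>D\<^sub>0\<close> it still hits row \<open>j\<close> minus \<open>D\<^sub>j\<close> with
  probability at least \<open>(2/3) e\<^sup>-\<^sup>\<epsilon>\<^sup>n\<close>, for every \<open>j\<close>. These events are disjoint, and a probability
  distribution cannot give mass bounded away from \<open>0\<close> to infinitely many disjoint events.\<close>

lemma eps_DP_group_privacy:
  fixes A :: "'a list \<Rightarrow> 'a pmf"
  assumes dp: "eps_DP \<epsilon> n A" and "\<epsilon> \<ge> 0" and xs: "length xs = n" and ys: "length ys = n"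
  shows "measure_pmf.prob (A xs) E \<le> exp \<epsilon> ^ n * measure_pmf.prob (A ys) E"
proof -
  define z where "z k = map (\<lambda>i. if i < k then ys ! i else xs ! i) [0..<n]" for k
  have "z 0 = xs" "z n = ys"
    unfolding z_def using xs ys by (simp_all add: list_eq_iff_nth_eq)
  have step: "measure_pmf.prob (A (z k)) E \<le> exp \<epsilon> * measure_pmf.prob (A (z (Suc k))) E"
    if "k < n" for k
  proof (cases "xs ! k = ys ! k")
    case True
    then have "z k = z (Suc k)"
      unfolding z_def by (auto intro!: map_cong simp: less_Suc_eq)
    moreover have "1 \<le> exp \<epsilon>"
      using \<open>\<epsilon> \<ge> 0\<close> by simp
    ultimately show ?thesis
      using mult_right_mono[of 1 "exp \<epsilon>" "measure_pmf.prob (A (z (Suc k))) E"] by simp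
  next
    case False
    with \<open>k < n\<close> have "{i. i < n \<and> z k ! i \<noteq> z (Suc k) ! i} = {k}"
      unfolding z_def by (auto split: if_splits)
    then have "neighbours n (z k) (z (Suc k))"
      unfolding neighbours_def z_def by simp
    with dp show ?thesis
      unfolding eps_DP_def by blast
  qed
  have "measure_pmf.prob (A xs) E \<le> exp \<epsilon> ^ k * measure_pmf.prob (A (z k)) E" if "k \<le> n" for k
    using that
  proof (induction k)
    case 0
    with \<open>z 0 = xs\<close> show ?case by simp
  next
    case (Suc k)
    then have "measure_pmf.prob (A xs) E \<le> exp \<epsilon> ^ k * measure_pmf.prob (A (z k)) E"
      by simp
    also have "\<dots> \<le> exp \<epsilon> ^ k * (exp \<epsilon> * measure_pmf.prob (A (z (Suc k))) E)"
      using step[of k] Suc.prems by (intro mult_left_mono) auto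
    finally show ?case
      by (simp add: mult_ac)
  qed
  from this[of n] \<open>z n = ys\<close> show ?thesis
    by simp
qed

lemma measure_pmf_disjoint_family_not_bounded_below:
  fixes M :: "'a pmf" and S :: "nat \<Rightarrow> 'a set"
  assumes "disjoint_family S" and "c > 0" and bound: "\<And>j. c \<le> measure_pmf.prob M (S j)"
  shows False
proof -
  obtain m :: nat where "1 / c < m"
    using reals_Archimedean2 by blast
  have "m * c = (\<Sum>j<m. c)"
    by simp
  also have "\<dots> \<le> (\<Sum>j<m. measure_pmf.prob M (S j))"
    using bound by (rule sum_mono)
  also have "\<dots> = measure_pmf.prob M (\<Union>j<m. S j)"
    using \<open>disjoint_family S\<close>
    by (intro measure_pmf.finite_measure_finite_Union[symmetric]) (auto simp: disjoint_family_on_def)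
  also have "\<dots> \<le> 1"
    by (rule measure_pmf.prob_le_1)
  finally show False
    using \<open>1 / c < m\<close> \<open>c > 0\<close> by (simp add: field_simps)
qed

lemma eps_DP_not_bounded_below_on_disjoint_targets:
  fixes A :: "'a list \<Rightarrow> 'a pmf" and D :: "nat \<Rightarrow> 'a list" and S :: "nat \<Rightarrow> 'a set"
  assumes dp: "eps_DP \<epsilon> n A" and "\<epsilon> \<ge> 0" and lengths: "\<And>j. length (D j) = n"
    and "disjoint_family S" and "p > 0" and bound: "\<And>j. p \<le> measure_pmf.prob (A (D j)) (S j)"
  shows False
proof (rule measure_pmf_disjoint_family_not_bounded_below)
  show "disjoint_family S" "p / exp \<epsilon> ^ n > 0"
    using assms by simp_all
  fix j
  have "p \<le> exp \<epsilon> ^ n * measure_pmf.prob (A (D 0)) (S j)"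
    using bound[of j] eps_DP_group_privacy[OF dp \<open>\<epsilon> \<ge> 0\<close> lengths lengths] by (rule order_trans)
  then show "p / exp \<epsilon> ^ n \<le> measure_pmf.prob (A (D 0)) (S j)"
    by (simp add: field_simps)
qed

lemma closure_bound_0_if_disjoint:
  fixes L :: "'a set set"
  assumes "L \<noteq> {}" and infinite: "\<And>K. K \<in> L \<Longrightarrow> infinite K" and "disjoint L"
  shows "closure_bound L 0"
  unfolding closure_bound_def
proof (intro allI impI)
  fix L' assume "L' \<subseteq> L"
  consider "L' = {}" | K where "L' = {K}" | K1 K2 where "K1 \<in> L'" "K2 \<in> L'" "K1 \<noteq> K2"
    by (metis equals0I singletonI subsetI subset_singletonD)
  then show "infinite (Cl L') \<or> int (card (Cl L')) \<le> 0"
  proof cases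
    case 1
    from \<open>L \<noteq> {}\<close> obtain K where "K \<in> L"
      by blast
    then have "infinite (UNIV :: 'a set)"
      using infinite infinite_super subset_UNIV by metis
    with 1 show ?thesis
      by (simp add: Cl_def)
  next
    case 2
    with \<open>L' \<subseteq> L\<close> infinite show ?thesis
      by (simp add: Cl_def)
  next
    case 3
    with \<open>L' \<subseteq> L\<close> \<open>disjoint L\<close> have "K1 \<inter> K2 = {}"
      by (auto simp: pairwise_def disjnt_def)
    with 3 have "Cl L' = {}"
      unfolding Cl_def by blast
    then show ?thesis
      by simp
  qed
qed

lemma closure_dimension_eq_0I:
  assumes "closure_bound L 0" and "L' \<subseteq> L" and "Cl L' = {}"
  shows "closure_dimension L = 0"
  unfolding closure_dimension_def
proof (rule Least_equality)
  show "-1 \<le> (0::int) \<and> closure_bound L 0"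
    using assms(1) by simp
next
  fix d :: int
  assume "-1 \<le> d \<and> closure_bound L d"
  then have "infinite (Cl L') \<or> int (card (Cl L')) \<le> d"
    using assms(2) unfolding closure_bound_def by blast
  with assms(3) show "0 \<le> d"
    by simp
qed

definition row :: "nat \<Rightarrow> point set" where
  "row j = {j} \<times> UNIV"

lemma infinite_row: "infinite (row j)"
proof
  assume "finite (row j)"
  then have "finite (snd ` row j)"
    by simp
  moreover have "snd ` row j = UNIV"
    unfolding row_def by auto
  ultimately show False
    by simp
qed

lemma disjoint_family_row: "disjoint_family row"
  unfolding disjoint_family_on_def row_def by auto

theorem corollaryD1:
  shows "\<exists>\<L> :: point set set.
     countable \<L> \<and> (\<forall>K \<in> \<L>. is_language K) \<and> closure_dimension \<L> = 0 \<and>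
     (\<forall>\<epsilon> > 0. \<forall>n :: nat. \<not> (\<exists>A :: point list \<Rightarrow> point pmf.
        eps_DP \<epsilon> n A \<and>
        (\<forall>K \<in> \<L>. \<forall>xs. length xs = n \<and> distinct xs \<and> set xs \<subseteq> K \<longrightarrow>
            measure_pmf.prob (A xs) (K - set xs) \<ge> 2/3)))"
proof (intro exI conjI allI impI notI; (elim exE conjE)?)
  show "countable (range row)" "\<forall>K \<in> range row. is_language K"
    by (simp_all add: is_language_def infinite_row)
  have "closure_bound (range row) 0"
    using infinite_row disjoint_family_on_disjoint_image[OF disjoint_family_row]
    by (intro closure_bound_0_if_disjoint) auto
  then show "closure_dimension (range row) = 0"
    by (rule closure_dimension_eq_0I[where L' = "{row 0, row 1}"]) (auto simp: Cl_def row_def)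
next
  fix \<epsilon> :: real and n :: nat and A :: "point list \<Rightarrow> point pmf"
  assume "\<epsilon> > 0" and dp: "eps_DP \<epsilon> n A" and accurate: "\<forall>K \<in> range row. \<forall>xs.
    length xs = n \<and> distinct xs \<and> set xs \<subseteq> K \<longrightarrow> measure_pmf.prob (A xs) (K - set xs) \<ge> 2/3"
  define D where "D j = map (Pair j) [0..<n]" for j :: nat
  have D: "length (D j) = n" "distinct (D j)" "set (D j) \<subseteq> row j" for j
    by (auto simp: D_def row_def distinct_map inj_on_def)
  with accurate have "2/3 \<le> measure_pmf.prob (A (D j)) (row j - set (D j))" for j
    by blast
  moreover have "disjoint_family (\<lambda>j. row j - set (D j))"
    using disjoint_family_row by (auto simp: disjoint_family_on_def)
  ultimately show False
    using \<open>\<epsilon> > 0\<close> D(1) by (intro eps_DP_not_bounded_below_on_disjoint_targets[OF dp, of D _ "2/3"]) auto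
qed

end
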